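(* Let $\alpha_1\in(0,1)$, $\rho_1,\rho_2>0$, $u_1,u_2$ be smooth functions of $(t,x)$, and let $\zeta_1,\dots,\zeta_5$ be given functions. Set \[ u_I=u,\qquad p_I=\frac{\alpha_2\rho_2p_1+\alpha_1\rho_1p_2}{\rho}. \] Then $(\alpha_1,\rho_1,\rho_2,u_1,u_2)$ solves the barotropic Baer–Nunziato system \begin{align*} &\partial_t\alpha_1+u_I\partial_x\alpha_1=\zeta_1,\quad \partial_t(\alpha_1\rho_1)+\partial_x(\alpha_1\rho_1u_1)=\zeta_2,\quad \partial_t(\alpha_2\rho_2)+\partial_x(\alpha_2\rho_2u_2)=\zeta_3,\\ &\partial_t(\alpha_1\rho_1u_1)+\partial_x(\alpha_1\rho_1u_1^2+\alpha_1p_1)-p_I\partial_x\alpha_1=\zeta_4,\quad \partial_t(\alpha_2\rho_2u_2)+\partial_x(\alpha_2\rho_2u_2^2+\alpha_2p_2)-p_I\partial_x\alpha_2=\zeta_5 \end{align*} if and only if it solves the conservative SHTC system \begin{align*} &\partial_t(\alpha_1\rho)+\partial_x(\alpha_1\rho u)=\xi_1,\quad \partial_t(\alpha_1\rho_1)+\partial_x(\alpha_1\rho_1u_1)=\xi_2,\quad \partial_t\rho+\partial_x(\rho u)=\xi_3,\\ &\partial_t(\alpha_1\rho_1u_1+\alpha_2\rho_2u_2)+\partial_x(\alpha_1\rho_1u_1^2+\alpha_2\rho_2u_2^2+\alpha_1p_1+\alpha_2p_2)=\xi_4,\\ &\partial_t(u_1-u_2)+\partial_x\Big(\tfrac12u_1^2-\tfrac12u_2^2+\Psi_1(\rho_1)-\Psi_2(\rho_2)\Big)=\xi_5,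 \end{align*} with $\xi=B\zeta$, where \[ B=\begin{pmatrix} \rho & \alpha_1 & \alpha_1 & 0 & 0\\ 0 & 1 & 0 & 0 & 0\\ 0 & 1 & 1 & 0 & 0\\ 0 & 0 & 0 & 1 & 1\\ 0 & -\frac{u_1}{\alpha_1\rho_1} & \frac{u_2}{\alpha_2\rho_2} & \frac{1}{\alpha_1\rho_1} & -\frac{1}{\alpha_2\rho_2} \end{pmatrix}. \] Moreover $B$ is invertible with inverse \[ C=\begin{pmatrix} \frac1\rho & 0 & -\frac{\alpha_1}{\rho} & 0 & 0\\ 0 & 1 & 0 & 0 & 0\\ 0 & -1 & 1 & 0 & 0\\ 0 & c_2u_1+c_1u_2 & -c_1u_2 & c_1 & c_1c_2\rho\\ 0 & -(c_2u_1+c_1u_2) & c_1u_2 & c_2 & -c_1c_2\rho \end{pmatrix}, \] so equivalently $\zeta=C\xi$.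
   Context: For $i=1,2$, $p_i:(0,\infty)\to\mathbb{R}$ is smooth with $p_i'>0$; $\varphi_i$ is an antiderivative of $\rho\mapsto p_i(\rho)/\rho^2$ and $\Psi_i(\rho)=\varphi_i(\rho)+p_i(\rho)/\rho$ (so $\Psi_i'=p_i'/\rho$). Notation: $\alpha_2=1-\alpha_1$, $\rho=\alpha_1\rho_1+\alpha_2\rho_2$, $c_i=\alpha_i\rho_i/\rho$, $u=c_1u_1+c_2u_2$, $p_i=p_i(\rho_i)$. *)

theory Defs
  imports "HOL-Analysis.Analysis"
begin

definition dt :: "(real \<Rightarrow> real \<Rightarrow> real) \<Rightarrow> real \<Rightarrow> real \<Rightarrow> real" where
  "dt f t x = deriv (\<lambda>s. f s x) t"

definition dx :: "(real \<Rightarrow> real \<Rightarrow> real) \<Rightarrow> real \<Rightarrow> real \<Rightarrow> real" where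
  "dx f t x = deriv (\<lambda>y. f t y) x"

coinductive smooth2 :: "(real \<Rightarrow> real \<Rightarrow> real) \<Rightarrow> bool" where
  "(\<forall>z. (\<lambda>w. f (fst w) (snd w)) differentiable (at z)) \<Longrightarrow> smooth2 (dt f) \<Longrightarrow> smooth2 (dx f)
   \<Longrightarrow> smooth2 f"

coinductive smooth_on_real :: "real set \<Rightarrow> (real \<Rightarrow> real) \<Rightarrow> bool" for S where
  "(\<forall>r\<in>S. f differentiable (at r)) \<Longrightarrow> smooth_on_real S (deriv f) \<Longrightarrow> smooth_on_real S f"

definition Psi :: "(real \<Rightarrow> real) \<Rightarrow> (real \<Rightarrow> real) \<Rightarrow> real \<Rightarrow> real" where
  "Psi phi p r = phi r + p r / r"

definition BN_system ::
  "(real \<Rightarrow> real) \<Rightarrow> (real \<Rightarrow> real) \<Rightarrow>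
   (real \<Rightarrow> real \<Rightarrow> real) \<Rightarrow> (real \<Rightarrow> real \<Rightarrow> real) \<Rightarrow> (real \<Rightarrow> real \<Rightarrow> real) \<Rightarrow>
   (real \<Rightarrow> real \<Rightarrow> real) \<Rightarrow> (real \<Rightarrow> real \<Rightarrow> real) \<Rightarrow> (real \<Rightarrow> real \<Rightarrow> real^5) \<Rightarrow> bool" where
  "BN_system p1 p2 a1 r1 r2 u1 u2 \<zeta> \<longleftrightarrow>
    (let a2 = (\<lambda>t x. 1 - a1 t x);
         rho = (\<lambda>t x. a1 t x * r1 t x + a2 t x * r2 t x);
         u = (\<lambda>t x. (a1 t x * r1 t x * u1 t x + a2 t x * r2 t x * u2 t x) / rho t x);
         P1 = (\<lambda>t x. p1 (r1 t x));
         P2 = (\<lambda>t x. p2 (r2 t x));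
         uI = u;
         pI = (\<lambda>t x. (a2 t x * r2 t x * P1 t x + a1 t x * r1 t x * P2 t x) / rho t x)
     in \<forall>t x.
       dt a1 t x + uI t x * dx a1 t x = \<zeta> t x $ 1 \<and>
       dt (\<lambda>t x. a1 t x * r1 t x) t x + dx (\<lambda>t x. a1 t x * r1 t x * u1 t x) t x = \<zeta> t x $ 2 \<and>
       dt (\<lambda>t x. a2 t x * r2 t x) t x + dx (\<lambda>t x. a2 t x * r2 t x * u2 t x) t x = \<zeta> t x $ 3 \<and>
       dt (\<lambda>t x. a1 t x * r1 t x * u1 t x) t x
         + dx (\<lambda>t x. a1 t x * r1 t x * (u1 t x)\<^sup>2 + a1 t x * P1 t x) t x
         - pI t x * dx a1 t x = \<zeta> t x $ 4 \<and>
       dt (\<lambda>t x. a2 t x * r2 t x * u2 t x) t x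
         + dx (\<lambda>t x. a2 t x * r2 t x * (u2 t x)\<^sup>2 + a2 t x * P2 t x) t x
         - pI t x * dx a2 t x = \<zeta> t x $ 5)"

definition SHTC_system ::
  "(real \<Rightarrow> real) \<Rightarrow> (real \<Rightarrow> real) \<Rightarrow> (real \<Rightarrow> real) \<Rightarrow> (real \<Rightarrow> real) \<Rightarrow>
   (real \<Rightarrow> real \<Rightarrow> real) \<Rightarrow> (real \<Rightarrow> real \<Rightarrow> real) \<Rightarrow> (real \<Rightarrow> real \<Rightarrow> real) \<Rightarrow>
   (real \<Rightarrow> real \<Rightarrow> real) \<Rightarrow> (real \<Rightarrow> real \<Rightarrow> real) \<Rightarrow> (real \<Rightarrow> real \<Rightarrow> real^5) \<Rightarrow> bool" where
  "SHTC_system p1 p2 phi1 phi2 a1 r1 r2 u1 u2 \<xi> \<longleftrightarrow>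
    (let a2 = (\<lambda>t x. 1 - a1 t x);
         rho = (\<lambda>t x. a1 t x * r1 t x + a2 t x * r2 t x);
         u = (\<lambda>t x. (a1 t x * r1 t x * u1 t x + a2 t x * r2 t x * u2 t x) / rho t x);
         P1 = (\<lambda>t x. p1 (r1 t x));
         P2 = (\<lambda>t x. p2 (r2 t x))
     in \<forall>t x.
       dt (\<lambda>t x. a1 t x * rho t x) t x + dx (\<lambda>t x. a1 t x * rho t x * u t x) t x = \<xi> t x $ 1 \<and>
       dt (\<lambda>t x. a1 t x * r1 t x) t x + dx (\<lambda>t x. a1 t x * r1 t x * u1 t x) t x = \<xi> t x $ 2 \<and>
       dt rho t x + dx (\<lambda>t x. rho t x * u t x) t x = \<xi> t x $ 3 \<and>
       dt (\<lambda>t x. a1 t x * r1 t x * u1 t x + a2 t x * r2 t x * u2 t x) t x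
         + dx (\<lambda>t x. a1 t x * r1 t x * (u1 t x)\<^sup>2 + a2 t x * r2 t x * (u2 t x)\<^sup>2
                     + a1 t x * P1 t x + a2 t x * P2 t x) t x = \<xi> t x $ 4 \<and>
       dt (\<lambda>t x. u1 t x - u2 t x) t x
         + dx (\<lambda>t x. (u1 t x)\<^sup>2 / 2 - (u2 t x)\<^sup>2 / 2 + Psi phi1 p1 (r1 t x) - Psi phi2 p2 (r2 t x)) t x
         = \<xi> t x $ 5)"

definition Bmat :: "real \<Rightarrow> real \<Rightarrow> real \<Rightarrow> real \<Rightarrow> real \<Rightarrow> real^5^5" where
  "Bmat a1 r1 r2 u1 u2 =
    (let a2 = 1 - a1; rho = a1 * r1 + a2 * r2 in
     vector [vector [rho, a1, a1, 0, 0],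
             vector [0, 1, 0, 0, 0],
             vector [0, 1, 1, 0, 0],
             vector [0, 0, 0, 1, 1],
             vector [0, - u1 / (a1 * r1), u2 / (a2 * r2), 1 / (a1 * r1), - 1 / (a2 * r2)]])"

definition Cmat :: "real \<Rightarrow> real \<Rightarrow> real \<Rightarrow> real \<Rightarrow> real \<Rightarrow> real^5^5" where
  "Cmat a1 r1 r2 u1 u2 =
    (let a2 = 1 - a1; rho = a1 * r1 + a2 * r2; c1 = a1 * r1 / rho; c2 = a2 * r2 / rho in
     vector [vector [1 / rho, 0, - a1 / rho, 0, 0],
             vector [0, 1, 0, 0, 0],
             vector [0, -1, 1, 0, 0],
             vector [0, c2 * u1 + c1 * u2, - c1 * u2, c1, c1 * c2 * rho],
             vector [0, - (c2 * u1 + c1 * u2), c1 * u2, c2, - c1 * c2 * rho]])"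

end

theory Submission
  imports Defs
begin

(* Both systems are pointwise linear in the same first-order derivatives, so it suffices
   to show that the vector of SHTC left-hand sides is B times the vector of Baer-Nunziato
   left-hand sides; since B is invertible, each system with its source is then equivalent to
   the other. The first four rows are product rules and sums of the phase balances (in the
   total momentum the p_I terms cancel because dx alpha_2 = - dx alpha_1). For the last row,
   the momentum balance of phase i minus u_i times its mass balance, divided by
   alpha_i rho_i, is dt u_i + dx (u_i^2/2 + Psi_i(rho_i)) up to the remainder
   (p_I - p_i) dx alpha_i / (alpha_i rho_i), because Psi_i' = p_i'/rho_i; the interface
   pressure p_I is exactly the one for which the two remainders cancel. *)

lemma exhaust_5:
  fixes x :: 5
  shows "x = 1 \<or> x = 2 \<or> x = 3 \<or> x = 4 \<or> x = 5"
proof (induct x)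
  case (of_int z)
  then have "z = 0 \<or> z = 1 \<or> z = 2 \<or> z = 3 \<or> z = 4" by fastforce
  then show ?case by auto
qed

lemma forall_5: "(\<forall>i::5. P i) \<longleftrightarrow> P 1 \<and> P 2 \<and> P 3 \<and> P 4 \<and> P 5"
  by (metis exhaust_5)

lemma UNIV_5: "UNIV = {1, 2, 3, 4, 5::5}"
  using exhaust_5 by auto

lemma sum_5: "sum f (UNIV::5 set) = f 1 + f 2 + f 3 + f 4 + f 5"
  unfolding UNIV_5 by (simp add: ac_simps)

lemma vector_5 [simp]:
 "(vector [a,b,c,d,e] :: ('a::zero)^5) $ 1 = a"
 "(vector [a,b,c,d,e] :: ('a::zero)^5) $ 2 = b"
 "(vector [a,b,c,d,e] :: ('a::zero)^5) $ 3 = c"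
 "(vector [a,b,c,d,e] :: ('a::zero)^5) $ 4 = d"
 "(vector [a,b,c,d,e] :: ('a::zero)^5) $ 5 = e"
  unfolding vector_def by simp_all

lemma field_differentiable_compose':
  "f field_differentiable at z \<Longrightarrow> g field_differentiable at (f z)
    \<Longrightarrow> (\<lambda>w. g (f w)) field_differentiable at z"
  using field_differentiable_compose[of f z g] by (simp add: o_def)

lemma deriv_compose:
  "f field_differentiable at z \<Longrightarrow> g field_differentiable at (f z)
    \<Longrightarrow> deriv (\<lambda>w. g (f w)) z = deriv g (f z) * deriv f z"
  using deriv_chain[of f z g] by (simp add: o_def)

definition partially_differentiable_at ::
    "(real \<Rightarrow> real \<Rightarrow> real) \<Rightarrow> real \<Rightarrow> real \<Rightarrow> bool" where
  "partially_differentiable_at f t x \<longleftrightarrow>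
     (\<lambda>s. f s x) field_differentiable at t \<and> f t field_differentiable at x"

lemma smooth2_imp_partially_differentiable_at:
  assumes "smooth2 f"
  shows "partially_differentiable_at f t x"
proof -
  have joint: "\<And>z. (\<lambda>w. f (fst w) (snd w)) differentiable at z"
    using assms by (cases rule: smooth2.cases) blast
  have "((\<lambda>w. f (fst w) (snd w)) \<circ> (\<lambda>s. (s, x))) differentiable at t"
    "((\<lambda>w. f (fst w) (snd w)) \<circ> (\<lambda>s. (t, s))) differentiable at x"
    by (auto intro!: differentiable_chain_at joint differentiable_Pair)
  then show ?thesis
    unfolding partially_differentiable_at_def field_differentiable_def
    by (simp add: o_def real_differentiable_def)
qed

lemma smooth_on_real_imp_field_differentiable:
  "smooth_on_real S f \<Longrightarrow> r \<in> S \<Longrightarrow> f field_differentiable at r"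
  by (cases rule: smooth_on_real.cases)
     (auto simp: field_differentiable_def real_differentiable_def)

lemma has_real_derivative_Psi:
  assumes "(phi has_real_derivative p r / r\<^sup>2) (at r)" and "p field_differentiable at r" and "r \<noteq> 0"
  shows "(Psi phi p has_real_derivative deriv p r / r) (at r)"
proof -
  have "(Psi phi p has_real_derivative p r / r\<^sup>2 + (deriv p r * r - p r) / r\<^sup>2) (at r)"
    unfolding Psi_def[abs_def]
    using assms DERIV_deriv_iff_field_differentiable
    by (auto intro!: derivative_eq_intros simp: power2_eq_square)
  moreover have "p r / r\<^sup>2 + (deriv p r * r - p r) / r\<^sup>2 = deriv p r / r"
    using assms(3) by (simp add: field_simps power2_eq_square)
  ultimately show ?thesis by simp
qed

lemmas field_differentiable_arith =
  field_differentiable_add field_differentiable_diff field_differentiable_mult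
  field_differentiable_divide field_differentiable_power field_differentiable_compose'

lemma transport_mult:
  assumes "partially_differentiable_at a t x" "partially_differentiable_at m t x"
    "partially_differentiable_at u t x"
  shows "dt (\<lambda>t x. a t x * m t x) t x + dx (\<lambda>t x. a t x * m t x * u t x) t x
       = m t x * (dt a t x + u t x * dx a t x) + a t x * (dt m t x + dx (\<lambda>t x. m t x * u t x) t x)"
  using assms unfolding partially_differentiable_at_def dt_def dx_def
  by (simp add: field_differentiable_arith algebra_simps)

lemma phase_velocity_balance:
  fixes \<alpha> r v :: "real \<Rightarrow> real \<Rightarrow> real" and p phi :: "real \<Rightarrow> real" and q :: real
  assumes "partially_differentiable_at \<alpha> t x" "partially_differentiable_at r t x"
    "partially_differentiable_at v t x"
    and p: "p field_differentiable at (r t x)"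
    and phi: "(phi has_real_derivative p (r t x) / (r t x)\<^sup>2) (at (r t x))"
    and "\<alpha> t x \<noteq> 0" "r t x \<noteq> 0"
  shows "dt v t x + dx (\<lambda>t x. (v t x)\<^sup>2 / 2 + Psi phi p (r t x)) t x
    = ((dt (\<lambda>t x. \<alpha> t x * r t x * v t x) t x
          + dx (\<lambda>t x. \<alpha> t x * r t x * (v t x)\<^sup>2 + \<alpha> t x * p (r t x)) t x - q * dx \<alpha> t x)
        - v t x * (dt (\<lambda>t x. \<alpha> t x * r t x) t x + dx (\<lambda>t x. \<alpha> t x * r t x * v t x) t x))
       / (\<alpha> t x * r t x)
      + dx \<alpha> t x * ((q - p (r t x)) / (\<alpha> t x * r t x))"
proof -
  have Psi: "Psi phi p field_differentiable at (r t x)"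
    "deriv (Psi phi p) (r t x) = deriv p (r t x) / r t x"
    using has_real_derivative_Psi[OF phi p \<open>r t x \<noteq> 0\<close>]
    by (auto simp: field_differentiable_def DERIV_imp_deriv)
  show ?thesis
    using assms Psi unfolding partially_differentiable_at_def dt_def dx_def
    by (simp add: field_differentiable_arith deriv_compose field_simps power2_eq_square)
qed

lemma interface_pressure_balance:
  fixes m1 m2 P1 P2 :: real
  assumes "m1 \<noteq> 0" "m2 \<noteq> 0" "m1 + m2 \<noteq> 0"
  shows "((m2 * P1 + m1 * P2) / (m1 + m2) - P1) / m1 + ((m2 * P1 + m1 * P2) / (m1 + m2) - P2) / m2 = 0"
proof -
  have "(m2 * P1 + m1 * P2) / (m1 + m2) - P1 = m1 * (P2 - P1) / (m1 + m2)"
    "(m2 * P1 + m1 * P2) / (m1 + m2) - P2 = m2 * (P1 - P2) / (m1 + m2)"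
    using assms(3) by (simp_all add: field_simps)
  then show ?thesis
    using assms by (simp add: add_divide_distrib[symmetric])
qed

locale barotropic_two_phase_flow =
  fixes p1 p2 phi1 phi2 :: "real \<Rightarrow> real" and a1 r1 r2 u1 u2 :: "real \<Rightarrow> real \<Rightarrow> real"
  assumes a1_range: "\<And>t x. 0 < a1 t x \<and> a1 t x < 1"
    and r1_pos: "\<And>t x. 0 < r1 t x" and r2_pos: "\<And>t x. 0 < r2 t x"
    and partially_differentiable: "\<And>t x. partially_differentiable_at a1 t x"
      "\<And>t x. partially_differentiable_at r1 t x" "\<And>t x. partially_differentiable_at r2 t x"
      "\<And>t x. partially_differentiable_at u1 t x" "\<And>t x. partially_differentiable_at u2 t x"
    and p1_differentiable: "\<And>r. 0 < r \<Longrightarrow> p1 field_differentiable at r"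
    and p2_differentiable: "\<And>r. 0 < r \<Longrightarrow> p2 field_differentiable at r"
    and phi1_deriv: "\<And>r. 0 < r \<Longrightarrow> (phi1 has_real_derivative p1 r / r\<^sup>2) (at r)"
    and phi2_deriv: "\<And>r. 0 < r \<Longrightarrow> (phi2 has_real_derivative p2 r / r\<^sup>2) (at r)"
begin

abbreviation a2 :: "real \<Rightarrow> real \<Rightarrow> real" where
  "a2 t x \<equiv> 1 - a1 t x"

abbreviation mixture_density :: "real \<Rightarrow> real \<Rightarrow> real" where
  "mixture_density t x \<equiv> a1 t x * r1 t x + a2 t x * r2 t x"

abbreviation mixture_velocity :: "real \<Rightarrow> real \<Rightarrow> real" where
  "mixture_velocity t x \<equiv>
     (a1 t x * r1 t x * u1 t x + a2 t x * r2 t x * u2 t x) / mixture_density t x"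

abbreviation interface_pressure :: "real \<Rightarrow> real \<Rightarrow> real" where
  "interface_pressure t x \<equiv>
     (a2 t x * r2 t x * p1 (r1 t x) + a1 t x * r1 t x * p2 (r2 t x)) / mixture_density t x"

definition BN_lhs :: "real \<Rightarrow> real \<Rightarrow> real^5" where
  "BN_lhs t x = vector [
     dt a1 t x + mixture_velocity t x * dx a1 t x,
     dt (\<lambda>t x. a1 t x * r1 t x) t x + dx (\<lambda>t x. a1 t x * r1 t x * u1 t x) t x,
     dt (\<lambda>t x. a2 t x * r2 t x) t x + dx (\<lambda>t x. a2 t x * r2 t x * u2 t x) t x,
     dt (\<lambda>t x. a1 t x * r1 t x * u1 t x) t x
       + dx (\<lambda>t x. a1 t x * r1 t x * (u1 t x)\<^sup>2 + a1 t x * p1 (r1 t x)) t x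
       - interface_pressure t x * dx a1 t x,
     dt (\<lambda>t x. a2 t x * r2 t x * u2 t x) t x
       + dx (\<lambda>t x. a2 t x * r2 t x * (u2 t x)\<^sup>2 + a2 t x * p2 (r2 t x)) t x
       - interface_pressure t x * dx a2 t x]"

definition SHTC_lhs :: "real \<Rightarrow> real \<Rightarrow> real^5" where
  "SHTC_lhs t x = vector [
     dt (\<lambda>t x. a1 t x * mixture_density t x) t x
       + dx (\<lambda>t x. a1 t x * mixture_density t x * mixture_velocity t x) t x,
     dt (\<lambda>t x. a1 t x * r1 t x) t x + dx (\<lambda>t x. a1 t x * r1 t x * u1 t x) t x,
     dt mixture_density t x + dx (\<lambda>t x. mixture_density t x * mixture_velocity t x) t x,
     dt (\<lambda>t x. a1 t x * r1 t x * u1 t x + a2 t x * r2 t x * u2 t x) t x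
       + dx (\<lambda>t x. a1 t x * r1 t x * (u1 t x)\<^sup>2 + a2 t x * r2 t x * (u2 t x)\<^sup>2
                   + a1 t x * p1 (r1 t x) + a2 t x * p2 (r2 t x)) t x,
     dt (\<lambda>t x. u1 t x - u2 t x) t x
       + dx (\<lambda>t x. (u1 t x)\<^sup>2 / 2 - (u2 t x)\<^sup>2 / 2
                   + Psi phi1 p1 (r1 t x) - Psi phi2 p2 (r2 t x)) t x]"

lemma BN_system_iff: "BN_system p1 p2 a1 r1 r2 u1 u2 \<zeta> \<longleftrightarrow> (\<forall>t x. BN_lhs t x = \<zeta> t x)"
  unfolding BN_system_def BN_lhs_def Let_def by (simp only: vec_eq_iff forall_5 vector_5)

lemma SHTC_system_iff:
  "SHTC_system p1 p2 phi1 phi2 a1 r1 r2 u1 u2 \<xi> \<longleftrightarrow> (\<forall>t x. SHTC_lhs t x = \<xi> t x)"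
  unfolding SHTC_system_def SHTC_lhs_def Let_def by (simp only: vec_eq_iff forall_5 vector_5)

lemma partial_field_differentiable [simp]:
  "(\<lambda>s. a1 s x) field_differentiable at t" "a1 t field_differentiable at x"
  "(\<lambda>s. r1 s x) field_differentiable at t" "r1 t field_differentiable at x"
  "(\<lambda>s. r2 s x) field_differentiable at t" "r2 t field_differentiable at x"
  "(\<lambda>s. u1 s x) field_differentiable at t" "u1 t field_differentiable at x"
  "(\<lambda>s. u2 s x) field_differentiable at t" "u2 t field_differentiable at x"
  using partially_differentiable unfolding partially_differentiable_at_def by blast+

lemma mixture_density_pos: "0 < mixture_density t x"
  using a1_range[of t x] r1_pos[of t x] r2_pos[of t x] by (simp add: add_pos_pos)

lemma phase_quantities_nonzero [simp]:
  "a1 t x \<noteq> 0" "a2 t x \<noteq> 0" "r1 t x \<noteq> 0" "r2 t x \<noteq> 0"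
  "a1 t x * r1 t x \<noteq> 0" "a2 t x * r2 t x \<noteq> 0" "mixture_density t x \<noteq> 0"
  using a1_range[of t x] r1_pos[of t x] r2_pos[of t x] mixture_density_pos[of t x] by auto

lemma pressure_field_differentiable:
  "p1 field_differentiable at (r1 t x)" "p2 field_differentiable at (r2 t x)"
  using p1_differentiable r1_pos p2_differentiable r2_pos by blast+

lemma phi_has_real_derivative:
  "(phi1 has_real_derivative p1 (r1 t x) / (r1 t x)\<^sup>2) (at (r1 t x))"
  "(phi2 has_real_derivative p2 (r2 t x) / (r2 t x)\<^sup>2) (at (r2 t x))"
  using phi1_deriv r1_pos phi2_deriv r2_pos by blast+

lemma partially_differentiable_at_a2: "partially_differentiable_at a2 t x"
  unfolding partially_differentiable_at_def by (simp add: field_differentiable_arith)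

lemma SHTC_lhs_mixture_mass: "SHTC_lhs t x $ 3 = BN_lhs t x $ 2 + BN_lhs t x $ 3"
proof -
  have momentum: "(\<lambda>t x. mixture_density t x * mixture_velocity t x)
      = (\<lambda>t x. a1 t x * r1 t x * u1 t x + a2 t x * r2 t x * u2 t x)"
    by (simp add: fun_eq_iff)
  show ?thesis
    unfolding SHTC_lhs_def BN_lhs_def vector_5 momentum dt_def dx_def
    by (simp add: field_differentiable_arith algebra_simps)
qed

lemma SHTC_lhs_volume_fraction:
  "SHTC_lhs t x $ 1
     = mixture_density t x * BN_lhs t x $ 1 + a1 t x * (BN_lhs t x $ 2 + BN_lhs t x $ 3)"
proof -
  have "partially_differentiable_at mixture_density t x"
    "partially_differentiable_at mixture_velocity t x"
    unfolding partially_differentiable_at_def by (simp_all add: field_differentiable_arith)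
  from transport_mult[OF partially_differentiable(1) this]
  show ?thesis
    using SHTC_lhs_mixture_mass unfolding SHTC_lhs_def BN_lhs_def vector_5 by simp
qed

lemma SHTC_lhs_phase_mass: "SHTC_lhs t x $ 2 = BN_lhs t x $ 2"
  unfolding SHTC_lhs_def BN_lhs_def by simp

lemma dx_a2: "dx a2 t x = - dx a1 t x"
  unfolding dx_def by simp

lemma SHTC_lhs_total_momentum: "SHTC_lhs t x $ 4 = BN_lhs t x $ 4 + BN_lhs t x $ 5"
proof -
  \<comment> \<open>p_I is kept atomic, so its two occurrences cancel instead of being expanded.\<close>
  define q where "q = interface_pressure t x"
  show ?thesis
    unfolding SHTC_lhs_def BN_lhs_def vector_5 q_def[symmetric] dx_a2 dt_def dx_def
    using pressure_field_differentiable by (simp add: field_differentiable_arith algebra_simps)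
qed

lemma SHTC_lhs_relative_velocity:
  "SHTC_lhs t x $ 5 = (BN_lhs t x $ 4 - u1 t x * BN_lhs t x $ 2) / (a1 t x * r1 t x)
                     - (BN_lhs t x $ 5 - u2 t x * BN_lhs t x $ 3) / (a2 t x * r2 t x)"
proof -
  note p = pressure_field_differentiable[of t x] and phi = phi_has_real_derivative[of t x]
  have "Psi phi1 p1 field_differentiable at (r1 t x)" "Psi phi2 p2 field_differentiable at (r2 t x)"
    using has_real_derivative_Psi[OF phi(1) p(1)] has_real_derivative_Psi[OF phi(2) p(2)]
    by (auto simp: field_differentiable_def)
  then have "SHTC_lhs t x $ 5
      = (dt u1 t x + dx (\<lambda>t x. (u1 t x)\<^sup>2 / 2 + Psi phi1 p1 (r1 t x)) t x)
        - (dt u2 t x + dx (\<lambda>t x. (u2 t x)\<^sup>2 / 2 + Psi phi2 p2 (r2 t x)) t x)"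
    unfolding SHTC_lhs_def vector_5 dt_def dx_def
    by (simp add: field_differentiable_arith deriv_compose algebra_simps)
  also have "\<dots> = ((BN_lhs t x $ 4 - u1 t x * BN_lhs t x $ 2) / (a1 t x * r1 t x)
       + dx a1 t x * ((interface_pressure t x - p1 (r1 t x)) / (a1 t x * r1 t x)))
     - ((BN_lhs t x $ 5 - u2 t x * BN_lhs t x $ 3) / (a2 t x * r2 t x)
       + dx a2 t x * ((interface_pressure t x - p2 (r2 t x)) / (a2 t x * r2 t x)))"
    unfolding BN_lhs_def vector_5
      phase_velocity_balance[where q = "interface_pressure t x",
        OF partially_differentiable(1,2,4) p(1) phi(1) phase_quantities_nonzero(1,3)]
      phase_velocity_balance[where q = "interface_pressure t x",
        OF partially_differentiable_at_a2 partially_differentiable(3,5) p(2) phi(2)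
          phase_quantities_nonzero(2,4)]
    by (rule refl)
  also have "\<dots> = (BN_lhs t x $ 4 - u1 t x * BN_lhs t x $ 2) / (a1 t x * r1 t x)
                     - (BN_lhs t x $ 5 - u2 t x * BN_lhs t x $ 3) / (a2 t x * r2 t x)
      + dx a1 t x * ((interface_pressure t x - p1 (r1 t x)) / (a1 t x * r1 t x)
                     + (interface_pressure t x - p2 (r2 t x)) / (a2 t x * r2 t x))"
    unfolding dx_a2 by (simp only: ring_distribs)
  also have "\<dots> = (BN_lhs t x $ 4 - u1 t x * BN_lhs t x $ 2) / (a1 t x * r1 t x)
                     - (BN_lhs t x $ 5 - u2 t x * BN_lhs t x $ 3) / (a2 t x * r2 t x)"
    unfolding interface_pressure_balance[OF phase_quantities_nonzero(5-7)] by simp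
  finally show ?thesis .
qed

lemma SHTC_lhs_eq_Bmat_BN_lhs:
  "SHTC_lhs t x = Bmat (a1 t x) (r1 t x) (r2 t x) (u1 t x) (u2 t x) *v BN_lhs t x"
  unfolding vec_eq_iff forall_5 matrix_vector_mult_def sum_5 vec_lambda_beta
    Bmat_def Let_def vector_5
  by (simp add: SHTC_lhs_volume_fraction SHTC_lhs_phase_mass SHTC_lhs_mixture_mass
      SHTC_lhs_total_momentum SHTC_lhs_relative_velocity diff_divide_distrib distrib_left)

end

lemma Bmat_Cmat_inverse:
  fixes a1 r1 r2 u1 u2 :: real
  assumes "a1 * r1 \<noteq> 0" "(1 - a1) * r2 \<noteq> 0" "a1 * r1 + (1 - a1) * r2 \<noteq> 0"
  shows "Bmat a1 r1 r2 u1 u2 ** Cmat a1 r1 r2 u1 u2 = mat 1"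
    and "Cmat a1 r1 r2 u1 u2 ** Bmat a1 r1 r2 u1 u2 = mat 1"
proof -
  define rho where "rho = a1 * r1 + (1 - a1) * r2"
  have nonzero: "rho \<noteq> 0" "a1 \<noteq> 0" "a1 \<noteq> 1" "r1 \<noteq> 0" "r2 \<noteq> 0"
    using assms unfolding rho_def by auto
  show "Bmat a1 r1 r2 u1 u2 ** Cmat a1 r1 r2 u1 u2 = mat 1"
    "Cmat a1 r1 r2 u1 u2 ** Bmat a1 r1 r2 u1 u2 = mat 1"
    unfolding Bmat_def Cmat_def Let_def rho_def[symmetric]
      matrix_matrix_mult_def mat_def vec_eq_iff forall_5 sum_5 vec_lambda_beta vector_5
    using nonzero by (simp_all add: field_simps) (simp_all add: rho_def algebra_simps)
qed

theorem mainTheorem5: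
  fixes p1 p2 phi1 phi2 :: "real \<Rightarrow> real"
    and a1 r1 r2 u1 u2 :: "real \<Rightarrow> real \<Rightarrow> real"
    and \<zeta> :: "real \<Rightarrow> real \<Rightarrow> real^5"
  assumes p1_smooth: "smooth_on_real {0<..} p1" and p2_smooth: "smooth_on_real {0<..} p2"
    and p1_mono: "\<forall>r>0. deriv p1 r > 0" and p2_mono: "\<forall>r>0. deriv p2 r > 0"
    and phi1: "\<forall>r>0. (phi1 has_real_derivative p1 r / r\<^sup>2) (at r)"
    and phi2: "\<forall>r>0. (phi2 has_real_derivative p2 r / r\<^sup>2) (at r)"
    and a1_range: "\<forall>t x. 0 < a1 t x \<and> a1 t x < 1"
    and r1_pos: "\<forall>t x. 0 < r1 t x" and r2_pos: "\<forall>t x. 0 < r2 t x"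
    and smooth: "smooth2 a1" "smooth2 r1" "smooth2 r2" "smooth2 u1" "smooth2 u2"
  shows "(BN_system p1 p2 a1 r1 r2 u1 u2 \<zeta> \<longleftrightarrow>
          SHTC_system p1 p2 phi1 phi2 a1 r1 r2 u1 u2
            (\<lambda>t x. Bmat (a1 t x) (r1 t x) (r2 t x) (u1 t x) (u2 t x) *v \<zeta> t x))
       \<and> (\<forall>t x. Bmat (a1 t x) (r1 t x) (r2 t x) (u1 t x) (u2 t x)
                  ** Cmat (a1 t x) (r1 t x) (r2 t x) (u1 t x) (u2 t x) = mat 1
             \<and> Cmat (a1 t x) (r1 t x) (r2 t x) (u1 t x) (u2 t x)
                  ** Bmat (a1 t x) (r1 t x) (r2 t x) (u1 t x) (u2 t x) = mat 1)
       \<and> (\<forall>t x. \<zeta> t x = Cmat (a1 t x) (r1 t x) (r2 t x) (u1 t x) (u2 t x)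
                   *v (Bmat (a1 t x) (r1 t x) (r2 t x) (u1 t x) (u2 t x) *v \<zeta> t x))"
proof -
  interpret barotropic_two_phase_flow p1 p2 phi1 phi2 a1 r1 r2 u1 u2
    using a1_range r1_pos r2_pos phi1 phi2 smooth
      smooth_on_real_imp_field_differentiable[OF p1_smooth]
      smooth_on_real_imp_field_differentiable[OF p2_smooth]
    by unfold_locales (auto intro: smooth2_imp_partially_differentiable_at)
  let ?B = "\<lambda>t x. Bmat (a1 t x) (r1 t x) (r2 t x) (u1 t x) (u2 t x)"
  let ?C = "\<lambda>t x. Cmat (a1 t x) (r1 t x) (r2 t x) (u1 t x) (u2 t x)"
  have inverse: "?B t x ** ?C t x = mat 1" "?C t x ** ?B t x = mat 1" for t x
    using Bmat_Cmat_inverse[OF phase_quantities_nonzero(5-7)] by blast+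
  then have C_B: "?C t x *v (?B t x *v v) = v" for t x v
    by (simp add: matrix_vector_mul_assoc)
  have "BN_system p1 p2 a1 r1 r2 u1 u2 \<zeta> \<longleftrightarrow>
        SHTC_system p1 p2 phi1 phi2 a1 r1 r2 u1 u2 (\<lambda>t x. ?B t x *v \<zeta> t x)"
    unfolding BN_system_iff SHTC_system_iff SHTC_lhs_eq_Bmat_BN_lhs by (metis C_B)
  with inverse C_B show ?thesis by simp
qed

end
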